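(* Let $\varepsilon>0$, $0<\tau\le\varepsilon$ and $\lambda:=\tau/\varepsilon$. Let $u_n\in\mathcal V_{[0,1]}$ and let $(u_{n+1},\beta_{n+1})$ with $\beta_{n+1}\in\mathcal B(u_{n+1})$ satisfy \[ u_{n+1} -e^{-\tau\Delta}u_n-\lambda u_{n+1}+\lambda\overline{u_{n+1}}\mathbf{1} =\lambda\beta_{n+1} -\lambda\overline{\beta_{n+1}}\mathbf{1}. \] Suppose $\bar u:=\overline{u_n}=\overline{u_{n+1}}\in(0,1)$. Then $(\beta_{n+1})_i-\overline{\beta_{n+1}}\in[\bar u-1,\bar u]$ and $(\beta_{n+1})_i\in[-1,1]$ for all $i\in V$.
   Context: $G=(V,E)$ is a finite, simple, connected, undirected graph with weights $\omega_{ij}=\omega_{ji}>0$ for $ij\in E$, $\omega_{ij}=0$ otherwise; $d_i=\sum_j\omega_{ij}$, $r\in[0,1]$ fixed. $\mathcal V$ = functions $V\to\mathbb R$ with $\langle u,v\rangle_{\mathcal V}=\sum_i u_iv_id_i^r$; $\mathcal V_{[0,1]}$ = functions $V\to[0,1]$. $(\Delta u)_i=d_i^{-r}\sum_j\omega_{ij}(u_i-u_j)$, $e^{-\tau\Delta}$ its matrix exponential. $\mathbf 1$ all-ones; $\mathcal M(u)=\langle u,\mathbf 1\rangle_{\mathcal V}$; $\bar v=\mathcal M(v)/\mathcal M(\mathbf 1)$. For $u\in\mathcal V_{[0,1]}$, $\mathcal B(u)$ = set of $\beta\in\mathcal V$ with $\beta_i\ge0$ if $u_i=0$, $\beta_i=0$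 if $0<u_i<1$, $\beta_i\le0$ if $u_i=1$; $\mathcal B(u)=\emptyset$ otherwise. *)

theory Defs
  imports "HOL-Analysis.Analysis"
begin

definition weighted_graph :: "('v::finite \<Rightarrow> 'v \<Rightarrow> real) \<Rightarrow> bool" where
  "weighted_graph w \<longleftrightarrow>
     (\<forall>i j. w i j = w j i) \<and> (\<forall>i j. w i j \<ge> 0) \<and> (\<forall>i. w i i = 0) \<and>
     (\<forall>i j. (\<lambda>a b. w a b > 0)\<^sup>*\<^sup>* i j)"

definition deg :: "('v::finite \<Rightarrow> 'v \<Rightarrow> real) \<Rightarrow> 'v \<Rightarrow> real" where
  "deg w i = (\<Sum>j\<in>UNIV. w i j)"

definition graph_laplacian :: "('v::finite \<Rightarrow> 'v \<Rightarrow> real) \<Rightarrow> real \<Rightarrow> ('v \<Rightarrow> real) \<Rightarrow> ('v \<Rightarrow> real)" where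
  "graph_laplacian w r u = (\<lambda>i. inverse (deg w i powr r) * (\<Sum>j\<in>UNIV. w i j * (u i - u j)))"

definition heat_semigroup :: "('v::finite \<Rightarrow> 'v \<Rightarrow> real) \<Rightarrow> real \<Rightarrow> real \<Rightarrow> ('v \<Rightarrow> real) \<Rightarrow> ('v \<Rightarrow> real)" where
  "heat_semigroup w r \<tau> u = (\<lambda>i. \<Sum>k. ((- \<tau>) ^ k / fact k) * ((graph_laplacian w r ^^ k) u) i)"

definition mass :: "('v::finite \<Rightarrow> 'v \<Rightarrow> real) \<Rightarrow> real \<Rightarrow> ('v \<Rightarrow> real) \<Rightarrow> real" where
  "mass w r u = (\<Sum>i\<in>UNIV. u i * deg w i powr r)"

definition avg :: "('v::finite \<Rightarrow> 'v \<Rightarrow> real) \<Rightarrow> real \<Rightarrow> ('v \<Rightarrow> real) \<Rightarrow> real" where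
  "avg w r v = mass w r v / mass w r (\<lambda>_. 1)"

definition in_B :: "('v \<Rightarrow> real) \<Rightarrow> ('v \<Rightarrow> real) \<Rightarrow> bool" where
  "in_B u \<beta> \<longleftrightarrow> (\<forall>i. 0 \<le> u i \<and> u i \<le> 1) \<and>
     (\<forall>i. (u i = 0 \<longrightarrow> \<beta> i \<ge> 0) \<and> (0 < u i \<and> u i < 1 \<longrightarrow> \<beta> i = 0) \<and> (u i = 1 \<longrightarrow> \<beta> i \<le> 0))"

end

theory Submission
  imports Defs
begin

text \<open>Split the Laplacian as \<open>\<Delta> = M - N\<close>, where the scalar \<open>M\<close> dominates every diagonal
entry \<open>d_i^(1-r)\<close> of \<open>\<Delta>\<close>; then \<open>N\<close> has nonnegative entries and \<open>N 1 = M 1\<close>. As \<open>M\<close> commutes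
with \<open>N\<close>, \<open>e^(-\<tau>\<Delta>) = e^(-\<tau>M) e^(\<tau>N)\<close>, and \<open>0 \<le> e^(\<tau>N) u \<le> e^(\<tau>M)\<close> for \<open>u\<close> with values
in \<open>[0,1]\<close>, so the heat semigroup preserves \<open>V_[0,1]\<close>.

Write \<open>u, \<beta>\<close> for \<open>u_(n+1), \<beta>_(n+1)\<close>. Since \<open>e^(-\<tau>\<Delta>) u_n \<in> [0,1]\<close> and \<open>\<lambda> > 0\<close>, the scheme gives
\<open>\<beta>_i - avg \<beta> \<le> avg u\<close> where \<open>u_i = 0\<close> and \<open>\<beta>_i - avg \<beta> \<ge> avg u - 1\<close> where \<open>u_i = 1\<close>. With
the sign conditions of \<open>B(u)\<close> this gives \<open>\<beta> \<le> (avg u + avg \<beta>)(1 - u)\<close> pointwise whenever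
\<open>avg u + avg \<beta> \<ge> 0\<close>; averaging yields \<open>avg \<beta> \<le> 1 - avg u\<close>. The symmetry
\<open>(u, \<beta>) \<mapsto> (1 - u, -\<beta>)\<close> yields \<open>avg \<beta> \<ge> -avg u\<close>, and the claimed bounds follow by cases
on \<open>u_i\<close>.\<close>

definition linear_operator :: "(('a \<Rightarrow> real) \<Rightarrow> ('a \<Rightarrow> real)) \<Rightarrow> bool" where
  "linear_operator N \<longleftrightarrow>
     (\<forall>(S::nat set) c f x. N (\<lambda>y. \<Sum>j\<in>S. c j * f j y) x = (\<Sum>j\<in>S. c j * N (f j) x))"

lemma sum_choose_Suc_recurrence:
  fixes g :: "nat \<Rightarrow> real"
  shows "c * (\<Sum>j\<le>k. real (k choose j) * c^(k-j) * g j) + (\<Sum>j\<le>k. real (k choose j) * c^(k-j) * g (Suc j))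
    = (\<Sum>j\<le>Suc k. real (Suc k choose j) * c^(Suc k-j) * g j)"
proof -
  have "(\<Sum>j\<le>Suc k. real (Suc k choose j) * c^(Suc k-j) * g j)
     = c^(Suc k) * g 0 + (\<Sum>j\<le>k. real (k choose j) * c^(k-j) * g (Suc j))
         + (\<Sum>j\<le>k. real (k choose Suc j) * c^(k-j) * g (Suc j))"
    by (subst sum.atMost_Suc_shift) (simp add: sum.distrib algebra_simps)
  moreover have "c * (\<Sum>j\<le>k. real (k choose j) * c^(k-j) * g j)
      = (\<Sum>j\<le>Suc k. real (k choose j) * c^(Suc k-j) * g j)"
    by (simp add: sum_distrib_left algebra_simps Suc_diff_le)
  moreover have "\<dots> = c^(Suc k) * g 0 + (\<Sum>j\<le>k. real (k choose Suc j) * c^(k-j) * g (Suc j))"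
    by (subst sum.atMost_Suc_shift) simp
  ultimately show ?thesis by simp
qed

lemma funpow_shift_minus_binomial:
  assumes N: "linear_operator N"
  shows "((\<lambda>v x. c * v x - N v x) ^^ k) u x
           = (\<Sum>j\<le>k. real (k choose j) * c^(k-j) * ((-1)^j * (N ^^ j) u x))"
proof (induction k arbitrary: x)
  case 0
  then show ?case by simp
next
  case (Suc k)
  let ?L = "\<lambda>v x. c * v x - N v x"
  have IH: "(?L ^^ k) u = (\<lambda>x. \<Sum>j\<le>k. (real (k choose j) * c^(k-j) * (-1)^j) * (N ^^ j) u x)"
    using Suc.IH by (auto simp: algebra_simps)
  have "N ((?L ^^ k) u) x = (\<Sum>j\<le>k. (real (k choose j) * c^(k-j) * (-1)^j) * (N ^^ Suc j) u x)"
    unfolding IH using N by (simp add: linear_operator_def)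
  also have "\<dots> = - (\<Sum>j\<le>k. real (k choose j) * c^(k-j) * ((-1)^(Suc j) * (N ^^ Suc j) u x))"
    by (simp add: sum_negf[symmetric] algebra_simps)
  finally have "(?L ^^ Suc k) u x = c * (?L ^^ k) u x
      + (\<Sum>j\<le>k. real (k choose j) * c^(k-j) * ((-1)^(Suc j) * (N ^^ Suc j) u x))"
    by simp
  then show ?case
    using sum_choose_Suc_recurrence[of c k "\<lambda>j. (-1)^j * (N ^^ j) u x"] Suc.IH
    by (simp del: funpow.simps)
qed

lemma exp_series_shift_minus:
  assumes N: "linear_operator N"
    and abs_summable: "summable (\<lambda>j. \<bar>\<tau>^j / fact j * (N ^^ j) u x\<bar>)"
  shows "(\<Sum>k. (-\<tau>)^k / fact k * ((\<lambda>v x. c * v x - N v x) ^^ k) u x)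
           = exp (-\<tau> * c) * (\<Sum>j. \<tau>^j / fact j * (N ^^ j) u x)"
proof -
  define a where "a j = \<tau>^j / fact j * (N ^^ j) u x" for j
  define b where "b m = (-\<tau> * c)^m / fact m" for m
  have "(-\<tau>)^k / fact k * ((\<lambda>v x. c * v x - N v x) ^^ k) u x = (\<Sum>j\<le>k. a j * b (k - j))" for k
    unfolding funpow_shift_minus_binomial[OF N] sum_distrib_left
  proof (rule sum.cong)
    fix j assume "j \<in> {..k}"
    then have jk: "j \<le> k" by simp
    have "(-\<tau>)^k = (-\<tau>)^j * (-\<tau>)^(k-j)"
      using jk by (simp flip: power_add)
    moreover have "(-\<tau>)^j * (-1)^j = \<tau>^j"
      by (simp flip: power_mult_distrib)
    ultimately have "(-\<tau>)^k * (-1)^j = \<tau>^j * (-\<tau>)^(k-j)"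
      by (metis mult.assoc mult.commute)
    then show "(-\<tau>)^k / fact k * (real (k choose j) * c^(k-j) * ((-1)^j * (N ^^ j) u x))
        = a j * b (k - j)"
      unfolding a_def b_def binomial_fact[OF jk] power_mult_distrib
      by (simp add: field_simps)
  qed simp
  then have "(\<Sum>k. (-\<tau>)^k / fact k * ((\<lambda>v x. c * v x - N v x) ^^ k) u x)
      = (\<Sum>k. a k) * (\<Sum>k. b k)"
    using Cauchy_product[of a b] abs_summable summable_norm_exp[of "-\<tau> * c"]
    by (simp add: a_def b_def divide_inverse mult.commute)
  moreover have "(\<Sum>k. b k) = exp (-\<tau> * c)"
    using exp_converges[of "-\<tau> * c"] by (simp add: b_def sums_iff divide_inverse mult.commute)
  ultimately show ?thesis
    by (simp add: a_def mult.commute)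
qed

definition laplacian_shift :: "('v::finite \<Rightarrow> 'v \<Rightarrow> real) \<Rightarrow> real \<Rightarrow> real" where
  "laplacian_shift w r = (\<Sum>i\<in>UNIV. inverse (deg w i powr r) * deg w i)"

definition laplacian_complement ::
    "('v::finite \<Rightarrow> 'v \<Rightarrow> real) \<Rightarrow> real \<Rightarrow> ('v \<Rightarrow> real) \<Rightarrow> ('v \<Rightarrow> real)" where
  "laplacian_complement w r v = (\<lambda>i. laplacian_shift w r * v i - graph_laplacian w r v i)"

lemma graph_laplacian_eq_shift_minus_complement:
  "graph_laplacian w r = (\<lambda>v i. laplacian_shift w r * v i - laplacian_complement w r v i)"
  by (simp add: laplacian_complement_def)

lemma laplacian_complement_eq:
  "laplacian_complement w r v i
     = (laplacian_shift w r - inverse (deg w i powr r) * deg w i) * v i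
       + inverse (deg w i powr r) * (\<Sum>j\<in>UNIV. w i j * v j)"
  unfolding laplacian_complement_def graph_laplacian_def deg_def
  by (simp add: algebra_simps sum_subtractf sum_distrib_left sum_distrib_right)

lemma linear_operator_laplacian_complement: "linear_operator (laplacian_complement w r)"
  unfolding linear_operator_def
proof (intro allI)
  fix S :: "nat set" and c f x
  let ?M = "laplacian_shift w r" and ?p = "inverse (deg w x powr r)"
  have "(\<Sum>l\<in>UNIV. w x l * (\<Sum>j\<in>S. c j * f j l)) = (\<Sum>j\<in>S. c j * (\<Sum>l\<in>UNIV. w x l * f j l))"
    by (simp add: sum_distrib_left sum.swap[of _ UNIV S] algebra_simps)
  then have "laplacian_complement w r (\<lambda>y. \<Sum>j\<in>S. c j * f j y) x
      = (\<Sum>j\<in>S. (?M - ?p * deg w x) * (c j * f j x)) + (\<Sum>j\<in>S. ?p * (c j * (\<Sum>l\<in>UNIV. w x l * f j l)))"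
    unfolding laplacian_complement_eq by (simp add: sum_distrib_left)
  also have "\<dots> = (\<Sum>j\<in>S. c j * laplacian_complement w r (f j) x)"
    unfolding laplacian_complement_eq sum.distrib[symmetric] by (rule sum.cong) (auto simp: algebra_simps)
  finally show "laplacian_complement w r (\<lambda>y. \<Sum>j\<in>S. c j * f j y) x
      = (\<Sum>j\<in>S. c j * laplacian_complement w r (f j) x)" .
qed

lemma deg_nonneg: "weighted_graph w \<Longrightarrow> 0 \<le> deg w i"
  unfolding deg_def weighted_graph_def by (simp add: sum_nonneg)

lemma laplacian_complement_bounds:
  assumes w: "weighted_graph w" and v: "\<forall>i. 0 \<le> v i \<and> v i \<le> C"
  shows "0 \<le> laplacian_complement w r v i \<and> laplacian_complement w r v i \<le> laplacian_shift w r * C"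
proof -
  let ?p = "inverse (deg w i powr r)"
  have p: "0 \<le> ?p" by simp
  have w0: "0 \<le> w i j" for j using w unfolding weighted_graph_def by simp
  have diag: "?p * deg w i \<le> laplacian_shift w r"
    unfolding laplacian_shift_def
    by (rule member_le_sum[where f = "\<lambda>i. inverse (deg w i powr r) * deg w i"])
       (simp_all add: deg_nonneg[OF w])
  have "0 \<le> (\<Sum>j\<in>UNIV. w i j * v j)"
    using v w0 by (simp add: sum_nonneg)
  moreover have "(\<Sum>j\<in>UNIV. w i j * v j) \<le> deg w i * C"
    unfolding deg_def sum_distrib_right using v w0 by (auto intro!: sum_mono mult_left_mono)
  ultimately have "0 \<le> ?p * (\<Sum>j\<in>UNIV. w i j * v j)"
    "?p * (\<Sum>j\<in>UNIV. w i j * v j) \<le> ?p * deg w i * C"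
    using p by (auto simp: mult.assoc mult_left_mono)
  moreover have "0 \<le> (laplacian_shift w r - ?p * deg w i) * v i"
    "(laplacian_shift w r - ?p * deg w i) * v i \<le> (laplacian_shift w r - ?p * deg w i) * C"
    using diag v by (auto intro: mult_left_mono)
  ultimately show ?thesis
    unfolding laplacian_complement_eq by (simp add: algebra_simps)
qed

lemma funpow_laplacian_complement_bounds:
  assumes w: "weighted_graph w" and u: "\<forall>i. 0 \<le> u i \<and> u i \<le> 1"
  shows "0 \<le> (laplacian_complement w r ^^ j) u i \<and> (laplacian_complement w r ^^ j) u i \<le> laplacian_shift w r ^ j"
proof (induction j arbitrary: i)
  case 0
  then show ?case using u by simp
next
  case (Suc j)
  then show ?case
    using laplacian_complement_bounds[OF w, of "(laplacian_complement w r ^^ j) u" "laplacian_shift w r ^ j" r i]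
    by simp
qed

lemma heat_semigroup_bounds:
  assumes w: "weighted_graph w" and u: "\<forall>i. 0 \<le> u i \<and> u i \<le> 1" and \<tau>: "0 \<le> \<tau>"
  shows "0 \<le> heat_semigroup w r \<tau> u i \<and> heat_semigroup w r \<tau> u i \<le> 1"
proof -
  let ?M = "laplacian_shift w r" and ?N = "laplacian_complement w r"
  define a where "a j = \<tau>^j / fact j * (?N ^^ j) u i" for j
  define e where "e j = (\<tau> * ?M)^j / fact j" for j
  have a0: "0 \<le> a j" for j
    using funpow_laplacian_complement_bounds[OF w u, where r=r and j=j and i=i] \<tau> by (simp add: a_def)
  have ae: "a j \<le> e j" for j
    using funpow_laplacian_complement_bounds[OF w u, where r=r and j=j and i=i] \<tau>
    by (auto simp: a_def e_def power_mult_distrib divide_right_mono mult_left_mono)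
  have e: "e sums exp (\<tau> * ?M)"
    using exp_converges[of "\<tau> * ?M"] unfolding e_def by (simp add: divide_inverse mult.commute)
  have "summable a"
    using summable_comparison_test[of a e] a0 ae e by (auto simp: sums_iff)
  then have "summable (\<lambda>j. \<bar>a j\<bar>)"
    using a0 by simp
  then have "heat_semigroup w r \<tau> u i = exp (-\<tau> * ?M) * suminf a"
    using exp_series_shift_minus[OF linear_operator_laplacian_complement[of w r], where c = ?M]
    unfolding heat_semigroup_def graph_laplacian_eq_shift_minus_complement a_def by simp
  moreover have "0 \<le> suminf a"
    using \<open>summable a\<close> a0 by (simp add: suminf_nonneg)
  moreover have "exp (-\<tau> * ?M) * suminf a \<le> exp (-\<tau> * ?M) * exp (\<tau> * ?M)"
    using suminf_le[of a e] \<open>summable a\<close> e ae by (simp add: sums_iff)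
  ultimately show ?thesis
    by (simp flip: exp_add)
qed

lemma avg_affine:
  assumes "mass w r (\<lambda>_. 1) \<noteq> 0"
  shows "avg w r (\<lambda>i. a + b * f i) = a + b * avg w r f"
proof -
  have "mass w r (\<lambda>i. a + b * f i) = a * mass w r (\<lambda>_. 1) + b * mass w r f"
    unfolding mass_def by (simp add: sum.distrib sum_distrib_left algebra_simps)
  then show ?thesis
    using assms unfolding avg_def by (simp add: field_simps)
qed

lemma avg_mono:
  assumes "\<And>i. f i \<le> g i"
  shows "avg w r f \<le> avg w r g"
  unfolding avg_def mass_def
  by (intro divide_right_mono sum_mono mult_right_mono assms) (simp_all add: sum_nonneg)

lemma in_B_reflect: "in_B u \<beta> \<Longrightarrow> in_B (\<lambda>i. 1 - u i) (\<lambda>i. - \<beta> i)"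
  unfolding in_B_def by auto

lemma in_B_cases:
  assumes "in_B u \<beta>"
  obtains "u i = 0" "0 \<le> \<beta> i" | "0 < u i" "u i < 1" "\<beta> i = 0" | "u i = 1" "\<beta> i \<le> 0"
  using assms unfolding in_B_def by (metis less_le)

lemma avg_le_one_minus_avg_if_in_B:
  assumes B: "in_B u \<beta>" and pos: "0 < avg w r u"
    and zero: "\<forall>i. u i = 0 \<longrightarrow> \<beta> i - avg w r \<beta> \<le> avg w r u"
  shows "avg w r \<beta> \<le> 1 - avg w r u"
proof (cases "avg w r u + avg w r \<beta> \<le> 0")
  case True
  then show ?thesis using pos by simp
next
  case False
  let ?s = "avg w r u + avg w r \<beta>"
  have mass: "mass w r (\<lambda>_. 1) \<noteq> 0"
    using pos by (auto simp: avg_def)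
  have "\<beta> i \<le> ?s + (- ?s) * u i" for i
  proof -
    have "\<beta> i \<le> ?s * (1 - u i)"
      using zero False by (cases rule: in_B_cases[OF B, of i]) auto
    then show ?thesis
      by (simp add: algebra_simps)
  qed
  then have "avg w r \<beta> \<le> ?s + (- ?s) * avg w r u"
    using avg_mono avg_affine[OF mass] by metis
  then have "avg w r u * avg w r \<beta> \<le> avg w r u * (1 - avg w r u)"
    by (simp add: algebra_simps)
  then show ?thesis
    using pos by simp
qed

lemma in_B_deviation_bounds:
  assumes B: "in_B u \<beta>" and pos: "0 < avg w r u" and lt1: "avg w r u < 1"
    and zero: "\<forall>i. u i = 0 \<longrightarrow> \<beta> i - avg w r \<beta> \<le> avg w r u"
    and one: "\<forall>i. u i = 1 \<longrightarrow> avg w r u - 1 \<le> \<beta> i - avg w r \<beta>"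
  shows "\<forall>i. avg w r u - 1 \<le> \<beta> i - avg w r \<beta> \<and> \<beta> i - avg w r \<beta> \<le> avg w r u
           \<and> -1 \<le> \<beta> i \<and> \<beta> i \<le> 1"
proof -
  have mass: "mass w r (\<lambda>_. 1) \<noteq> 0"
    using pos by (auto simp: avg_def)
  have avg_reflect: "avg w r (\<lambda>i. 1 - u i) = 1 - avg w r u" "avg w r (\<lambda>i. - \<beta> i) = - avg w r \<beta>"
    using avg_affine[OF mass, of 1 "-1" u] avg_affine[OF mass, of 0 "-1" \<beta>] by simp_all
  have upper: "avg w r \<beta> \<le> 1 - avg w r u"
    using avg_le_one_minus_avg_if_in_B[OF B pos zero] .
  have lower: "- avg w r \<beta> \<le> avg w r u"
    using avg_le_one_minus_avg_if_in_B[OF in_B_reflect[OF B], of w r] one lt1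
    unfolding avg_reflect by (auto simp: algebra_simps)
  show ?thesis
  proof (intro allI)
    fix i
    show "avg w r u - 1 \<le> \<beta> i - avg w r \<beta> \<and> \<beta> i - avg w r \<beta> \<le> avg w r u
        \<and> -1 \<le> \<beta> i \<and> \<beta> i \<le> 1"
      using zero one upper lower
      by (cases rule: in_B_cases[OF B, of i]) auto
  qed
qed

text \<open>Neither \<open>\<tau> \<le> \<epsilon>\<close>, nor \<open>r \<in> [0,1]\<close>, nor the conservation of the average
\<open>u\<^sub>n\<^sub>,\<^sub>a\<^sub>v\<^sub>g = u\<^sub>n\<^sub>+\<^sub>1\<^sub>,\<^sub>a\<^sub>v\<^sub>g\<close> is needed.\<close>

theorem lemma38:
  fixes w :: "'v::finite \<Rightarrow> 'v \<Rightarrow> real" and r \<epsilon> \<tau> :: real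
    and u0 u1 \<beta> :: "'v \<Rightarrow> real"
  assumes "weighted_graph w"
    and "0 \<le> r" "r \<le> 1"
    and "\<epsilon> > 0" "0 < \<tau>" "\<tau> \<le> \<epsilon>"
    and "\<forall>i. 0 \<le> u0 i \<and> u0 i \<le> 1"
    and "in_B u1 \<beta>"
    and "\<forall>i. u1 i - heat_semigroup w r \<tau> u0 i - (\<tau> / \<epsilon>) * u1 i + (\<tau> / \<epsilon>) * avg w r u1
              = (\<tau> / \<epsilon>) * \<beta> i - (\<tau> / \<epsilon>) * avg w r \<beta>"
    and "avg w r u0 = avg w r u1"
    and "0 < avg w r u1" "avg w r u1 < 1"
  shows "\<forall>i. avg w r u1 - 1 \<le> \<beta> i - avg w r \<beta> \<and> \<beta> i - avg w r \<beta> \<le> avg w r u1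
           \<and> -1 \<le> \<beta> i \<and> \<beta> i \<le> 1"
proof (rule in_B_deviation_bounds[OF assms(8,11,12)])
  let ?l = "\<tau> / \<epsilon>" and ?h = "heat_semigroup w r \<tau> u0"
  have \<lambda>: "0 < ?l"
    using assms(4,5) by simp
  have h: "0 \<le> ?h i" "?h i \<le> 1" for i
    using heat_semigroup_bounds[OF assms(1,7)] assms(5) by (simp_all add: less_imp_le)
  have step: "?l * (\<beta> i - avg w r \<beta>) = u1 i - ?h i - ?l * u1 i + ?l * avg w r u1" for i
    using assms(9) by (simp add: right_diff_distrib)
  show "\<forall>i. u1 i = 0 \<longrightarrow> \<beta> i - avg w r \<beta> \<le> avg w r u1"
  proof (intro allI impI)
    fix i assume "u1 i = 0"
    then have "?l * (\<beta> i - avg w r \<beta>) \<le> ?l * avg w r u1"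
      using step[of i] h(1)[of i] by simp
    then show "\<beta> i - avg w r \<beta> \<le> avg w r u1"
      by (simp only: mult_le_cancel_left_pos[OF \<lambda>])
  qed
  show "\<forall>i. u1 i = 1 \<longrightarrow> avg w r u1 - 1 \<le> \<beta> i - avg w r \<beta>"
  proof (intro allI impI)
    fix i assume "u1 i = 1"
    then have "?l * (avg w r u1 - 1) \<le> ?l * (\<beta> i - avg w r \<beta>)"
      using step[of i] h(2)[of i] by (simp add: algebra_simps)
    then show "avg w r u1 - 1 \<le> \<beta> i - avg w r \<beta>"
      by (simp only: mult_le_cancel_left_pos[OF \<lambda>])
  qed
qed

end
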